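(* Let $(a_n)_{n\ge 0}$ be the Pisot sequence $E(4,7)$, i.e. $a_0=4$, $a_1=7$, and $a_n=\left\lfloor \frac{a_{n-1}^2}{a_{n-2}}+\frac12\right\rfloor$ for $n\ge 2$. Then $a_n = 2a_{n-1}-a_{n-2}+a_{n-3}$ for all $n\ge 3$.
   Context: $\lfloor x\rfloor$ denotes the largest integer $\le x$. The sequence begins $4, 7, 12, 21, 37, 65, 114, 200, \dots$. *)

theory Defs
  imports Complex_Main
begin

fun pisot_E47 :: "nat \<Rightarrow> int" where
  "pisot_E47 0 = 4"
| "pisot_E47 (Suc 0) = 7"
| "pisot_E47 (Suc (Suc n)) =
     \<lfloor>(real_of_int (pisot_E47 (Suc n)))^2 / real_of_int (pisot_E47 n) + 1/2\<rfloor>"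

end

theory Submission
  imports Defs
begin

text \<open>Let \<open>b\<close> be the solution of \<open>b (n+3) = 2 b (n+2) - b (n+1) + b n\<close> with initial values
  4, 7, 12. Writing \<open>b (n+1)\<^sup>2 = b (n+2) b n + D n\<close>, the rounding step of the Pisot recursion
  returns \<open>b (n+2)\<close> as long as \<open>\<bar>2 D n\<bar> < b n\<close>. The defect \<open>D\<close> satisfies the same linear
  recurrence; since the characteristic polynomial \<open>x\<^sup>3 - 2x\<^sup>2 + x - 1\<close> has one root near 1.755
  and two complex roots of modulus near 0.755, \<open>b\<close> grows at least like \<open>(17/10)\<^sup>n\<close> while \<open>D\<close> decays.
  A quadratic Lyapunov form contracting by \<open>(10/17)\<^sup>2\<close> per step makes this quantitative.\<close>

fun lin_E47 :: "nat \<Rightarrow> int" where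
  "lin_E47 0 = 4"
| "lin_E47 (Suc 0) = 7"
| "lin_E47 (Suc (Suc 0)) = 12"
| "lin_E47 (Suc (Suc (Suc n))) = 2 * lin_E47 (Suc (Suc n)) - lin_E47 (Suc n) + lin_E47 n"

lemma lin_E47_rec: "lin_E47 (n + 3) = 2 * lin_E47 (n + 2) - lin_E47 (n + 1) + lin_E47 n"
  by (simp add: eval_nat_numeral)

lemma lin_E47_growth:
  "0 < lin_E47 n \<and> 17 * lin_E47 n \<le> 10 * lin_E47 (n + 1) \<and> lin_E47 (n + 1) \<le> 2 * lin_E47 n"
proof -
  let ?P = "\<lambda>n. 0 < lin_E47 n \<and> 17 * lin_E47 n \<le> 10 * lin_E47 (n + 1)
                  \<and> lin_E47 (n + 1) \<le> 2 * lin_E47 n"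
  have "?P n \<and> ?P (n + 1)"
  proof (induction n)
    case 0
    show ?case by (simp add: eval_nat_numeral)
  next
    case (Suc n)
    then show ?case using lin_E47_rec[of n] by (simp add: eval_nat_numeral)
  qed
  then show ?thesis by blast
qed

definition defect :: "(nat \<Rightarrow> 'a::comm_ring_1) \<Rightarrow> nat \<Rightarrow> 'a" where
  "defect f n = f (n + 1)^2 - f (n + 2) * f n"

lemma defect_rec:
  fixes f :: "nat \<Rightarrow> 'a::comm_ring_1"
  assumes rec: "\<And>n. f (n + 3) = 2 * f (n + 2) - f (n + 1) + f n"
  shows "defect f (n + 3) = defect f (n + 2) - 2 * defect f (n + 1) + defect f n"
proof -
  have rec_Suc: "f (Suc (Suc (Suc n))) = 2 * f (Suc (Suc n)) - f (Suc n) + f n"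
       "f (Suc (Suc (Suc (Suc n)))) = 2 * f (Suc (Suc (Suc n))) - f (Suc (Suc n)) + f (Suc n)"
       "f (Suc (Suc (Suc (Suc (Suc n))))) =
          2 * f (Suc (Suc (Suc (Suc n)))) - f (Suc (Suc (Suc n))) + f (Suc (Suc n))"
    using rec[of n] rec[of "Suc n"] rec[of "Suc (Suc n)"] by (simp_all add: eval_nat_numeral)
  show ?thesis
    unfolding defect_def
    by (simp add: eval_nat_numeral power2_eq_square rec_Suc) (simp add: algebra_simps)
qed

text \<open>A Lyapunov form for the companion matrix of \<open>x\<^sup>3 - 2x\<^sup>2 + x - 1\<close>; the two sum-of-squares
  identities below certify its contraction rate and its comparison with the first coordinate.\<close>

definition lyap :: "'a::comm_ring_1 \<Rightarrow> 'a \<Rightarrow> 'a \<Rightarrow> 'a" where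
  "lyap x y z = 3*x*x + 8*y*y + 4*z*z - 6*x*y + 2*x*z - 6*y*z"

lemma lyap_step:
  fixes x y z :: "'a::linordered_idom"
  shows "100 * lyap y z (z - 2*y + x) \<le> 289 * lyap x y z"
proof -
  have "4*351315*467 * (289 * lyap x y z - 100 * lyap y z (z - 2*y + x)) =
        4*351315*(467*x - 167*y + 189*z)^2 + (2*351315*y - 373052*z)^2 + 175513482356 * z^2"
    unfolding lyap_def by (simp add: algebra_simps power2_eq_square)
  moreover have "0 \<le> 4*351315*(467*x - 167*y + 189*z)^2 + (2*351315*y - 373052*z)^2
                       + 175513482356 * z^2"
    by simp
  ultimately have "0 \<le> 4*351315*467 * (289 * lyap x y z - 100 * lyap y z (z - 2*y + x))"
    by simp
  then show ?thesis by (simp add: zero_le_mult_iff)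
qed

lemma lyap_lower:
  fixes x y z :: "'a::linordered_idom"
  shows "43 * x^2 \<le> 23 * lyap x y z"
proof -
  have "26 * (23 * lyap x y z - 43 * x^2) = (26*x - 69*y + 23*z)^2 + 23*(y - 9*z)^2"
    unfolding lyap_def by (simp add: algebra_simps power2_eq_square)
  moreover have "0 \<le> (26*x - 69*y + 23*z)^2 + 23*(y - 9*z)^2" by simp
  ultimately have "0 \<le> 26 * (23 * lyap x y z - 43 * x^2)" by simp
  then show ?thesis by (simp add: zero_le_mult_iff)
qed

abbreviation "D_E47 \<equiv> defect lin_E47"

lemma lyap_defect_E47_less:
  "n \<ge> 5 \<Longrightarrow> 92 * lyap (D_E47 n) (D_E47 (n+1)) (D_E47 (n+2)) < 43 * lin_E47 n ^ 2"
proof (induction n rule: dec_induct)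
  case base
  show ?case by (simp add: lyap_def defect_def eval_nat_numeral)
next
  case (step n)
  have contract: "100 * lyap (D_E47 (n+1)) (D_E47 (n+2)) (D_E47 (n+3))
                  \<le> 289 * lyap (D_E47 n) (D_E47 (n+1)) (D_E47 (n+2))"
    using lyap_step by (simp add: defect_rec[OF lin_E47_rec])
  have "0 < lin_E47 n" "17 * lin_E47 n \<le> 10 * lin_E47 (n+1)"
    using lin_E47_growth[of n] by auto
  then have "(17 * lin_E47 n)^2 \<le> (10 * lin_E47 (n+1))^2"
    by (intro power_mono) auto
  then have grow: "289 * lin_E47 n ^ 2 \<le> 100 * lin_E47 (n+1) ^ 2"
    by (simp add: power_mult_distrib)
  show ?case using contract grow step.IH by (simp add: eval_nat_numeral)
qed

lemma defect_E47_bound: "\<bar>2 * D_E47 n\<bar> < lin_E47 n"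
proof -
  have "4 * D_E47 n ^ 2 < lin_E47 n ^ 2"
  proof (cases "n \<ge> 5")
    case True
    then show ?thesis
      using lyap_defect_E47_less lyap_lower[of "D_E47 n" "D_E47 (n+1)" "D_E47 (n+2)"]
      by fastforce
  next
    case False
    then have "n \<in> {0, 1, 2, 3, 4}" by auto
    then show ?thesis by (auto simp: defect_def eval_nat_numeral)
  qed
  then have "\<bar>2 * D_E47 n\<bar>^2 < \<bar>lin_E47 n\<bar>^2" by (simp add: power_mult_distrib)
  then show ?thesis using lin_E47_growth[of n] power2_less_imp_less by fastforce
qed

lemma floor_round_div_eq:
  fixes b x :: real and c :: int
  assumes "\<bar>2 * x\<bar> < b"
  shows "\<lfloor>(c * b + x) / b + 1/2\<rfloor> = c"
proof -
  have "b > 0" using assms by linarith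
  then have "(c * b + x) / b + 1/2 = c + (x / b + 1/2)" by (simp add: field_simps)
  moreover have "-1/2 \<le> x / b" "x / b < 1/2"
    using assms \<open>b > 0\<close> by (simp_all add: divide_simps abs_less_iff)
  ultimately show ?thesis by (simp add: floor_eq_iff)
qed

lemma pisot_E47_eq_lin_E47: "pisot_E47 n = lin_E47 n \<and> pisot_E47 (Suc n) = lin_E47 (Suc n)"
proof (induction n)
  case 0
  show ?case by simp
next
  case (Suc n)
  have "real_of_int (lin_E47 (Suc n))^2 = lin_E47 (n+2) * real_of_int (lin_E47 n) + D_E47 n"
    unfolding defect_def by simp
  moreover have "\<bar>2 * real_of_int (D_E47 n)\<bar> < lin_E47 n"
    using defect_E47_bound[of n] by linarith
  ultimately have "pisot_E47 (Suc (Suc n)) = lin_E47 (n+2)"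
    using Suc.IH floor_round_div_eq by simp
  then show ?case using Suc.IH by (simp add: eval_nat_numeral)
qed

theorem mainTheorem1:
  fixes n :: nat
  assumes "n \<ge> 3"
  shows "pisot_E47 n = 2 * pisot_E47 (n - 1) - pisot_E47 (n - 2) + pisot_E47 (n - 3)"
proof -
  obtain m where m: "n = m + 3" using assms by (metis add.commute le_iff_add)
  have "pisot_E47 k = lin_E47 k" for k using pisot_E47_eq_lin_E47[of k] by blast
  then show ?thesis unfolding m using lin_E47_rec[of m] by (simp add: eval_nat_numeral)
qed

end
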